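(* Let $q$ be a prime power, $t\ge3$, and let $G_{PvP}=(V,E)$ be the Plane-vs-Plane graph over $\mathbb F_q^t$. Then for every nonempty subset $S\subseteq V$, $\Phi(S)\ge 1-\frac{|S|}{|V|}-\frac{3}{q}$.
   Context: The Plane-vs-Plane graph over $\mathbb F_q^t$ has as vertices all affine 2-dimensional subspaces (planes) of $\mathbb F_q^t$, and an undirected edge between two planes whenever their intersection is an affine line; it is regular. For $S\subseteq V$, the edge expansion is $\Phi(S)=\Pr_{(u,v)\in E}[v\notin S\mid u\in S]$, the probability that a uniformly random edge with an endpoint $u\in S$ has its other endpoint outside $S$. *)

theory Defs
  imports "HOL-Analysis.Finite_Cartesian_Product"
begin

text \<open>Points of F_q^t are vectors of type 'a ^ 'n, with 'a a finite field (so q = CARD('a)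
  is automatically a prime power) and t = CARD('n).\<close>

definition lin_indep2 :: "'a::field ^ 'n \<Rightarrow> 'a ^ 'n \<Rightarrow> bool" where
  "lin_indep2 u v \<longleftrightarrow> (\<forall>a b. (\<chi> i. a * u $ i + b * v $ i) = 0 \<longrightarrow> a = 0 \<and> b = 0)"

definition affine_plane :: "('a::field ^ 'n) set \<Rightarrow> bool" where
  "affine_plane P \<longleftrightarrow> (\<exists>p u v. lin_indep2 u v \<and>
     P = {\<chi> i. p $ i + a * u $ i + b * v $ i | a b. True})"

definition affine_line :: "('a::field ^ 'n) set \<Rightarrow> bool" where
  "affine_line L \<longleftrightarrow> (\<exists>p u. u \<noteq> 0 \<and> L = {\<chi> i. p $ i + a * u $ i | a. True})"

definition pvp_vertices :: "('a::field ^ 'n) set set" where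
  "pvp_vertices = {P. affine_plane P}"

definition pvp_edge :: "('a::field ^ 'n) set \<Rightarrow> ('a ^ 'n) set \<Rightarrow> bool" where
  "pvp_edge P Q \<longleftrightarrow> P \<in> pvp_vertices \<and> Q \<in> pvp_vertices \<and> affine_line (P \<inter> Q)"

definition pvp_expansion :: "('a::field ^ 'n) set set \<Rightarrow> real" where
  "pvp_expansion S =
     real (card {(P, Q). P \<in> S \<and> Q \<notin> S \<and> pvp_edge P Q})
     / real (card {(P, Q). P \<in> S \<and> pvp_edge P Q})"

end

theory Submission
  imports Defs "HOL-Analysis.Convex"
begin

text \<open>For a set \<open>S\<close> of planes let \<open>d L\<close> be the number of planes of \<open>S\<close> through the line \<open>L\<close>
  and \<open>r x\<close> the number through the point \<open>x\<close>. Counting triples \<open>(L, P, Q)\<close> with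
  \<open>L \<subseteq> P \<inter> Q\<close> shows that \<open>\<Sum> d L\<^sup>2\<close> is \<open>q (q + 1) |S|\<close> plus the number of edges inside \<open>S\<close>.
  This sum is bounded by two second-moment (Cauchy-Schwarz) estimates: among the lines through a
  point any two span exactly one plane, which bounds \<open>\<Sum>\<^sub>L\<^sub>\<ni>\<^sub>x d L\<^sup>2\<close> in terms of \<open>r x\<close>; and any
  two points lie in the same number of planes, which bounds \<open>\<Sum> r x\<^sup>2\<close> by its mean-field value plus
  a term linear in \<open>|S|\<close>.\<close>

lemma card_UN_disjoint_const:
  assumes "finite I" "\<And>i. i \<in> I \<Longrightarrow> finite (A i)" "\<And>i. i \<in> I \<Longrightarrow> card (A i) = k"
    and "\<And>i j z. i \<in> I \<Longrightarrow> j \<in> I \<Longrightarrow> z \<in> A i \<Longrightarrow> z \<in> A j \<Longrightarrow> i = j"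
  shows "card (\<Union>i\<in>I. A i) = card I * k"
proof -
  have "card (\<Union>i\<in>I. A i) = (\<Sum>i\<in>I. card (A i))"
    by (rule card_UN_disjoint) (use assms in blast)+
  then show ?thesis
    using assms(3) by simp
qed

lemma sum_sq_incident_sum_eq:
  fixes z :: "'a \<Rightarrow> real"
  assumes "finite A" "finite B"
    and deg: "\<And>a. a \<in> A \<Longrightarrow> card {b\<in>B. I a b} = k"
    and codeg: "\<And>a a'. a \<in> A \<Longrightarrow> a' \<in> A \<Longrightarrow> a \<noteq> a' \<Longrightarrow> card {b\<in>B. I a b \<and> I a' b} = l"
  shows "(\<Sum>b\<in>B. (\<Sum>a\<in>A. if I a b then z a else 0)^2)
       = (real k - real l) * (\<Sum>a\<in>A. (z a)^2) + real l * (\<Sum>a\<in>A. z a)^2"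
proof -
  have "(\<Sum>b\<in>B. (\<Sum>a\<in>A. if I a b then z a else 0)^2)
      = (\<Sum>b\<in>B. \<Sum>a\<in>A. \<Sum>a'\<in>A. if I a b \<and> I a' b then z a * z a' else 0)"
    unfolding power2_eq_square sum_product by (intro sum.cong refl) auto
  also have "\<dots> = (\<Sum>a\<in>A. \<Sum>a'\<in>A. \<Sum>b\<in>B. if I a b \<and> I a' b then z a * z a' else 0)"
    by (simp add: sum.swap[of _ B] sum.swap[of _ B A])
  also have "\<dots> = (\<Sum>a\<in>A. \<Sum>a'\<in>A. z a * z a' * real (card {b\<in>B. I a b \<and> I a' b}))"
    using assms(2) by (intro sum.cong refl) (simp add: sum.If_cases Int_def)
  also have "\<dots> = (\<Sum>a\<in>A. \<Sum>a'\<in>A. real l * (z a * z a') + (if a = a' then (real k - real l) * (z a)^2 else 0))"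
    using deg codeg by (intro sum.cong refl) (auto simp: power2_eq_square algebra_simps)
  also have "\<dots> = real l * (\<Sum>a\<in>A. \<Sum>a'\<in>A. z a * z a') + (real k - real l) * (\<Sum>a\<in>A. (z a)^2)"
    using assms(1) by (simp add: sum.distrib sum_distrib_left)
  also have "\<dots> = (real k - real l) * (\<Sum>a\<in>A. (z a)^2) + real l * (\<Sum>a\<in>A. z a)^2"
    by (simp add: power2_eq_square sum_product)
  finally show ?thesis .
qed

lemma sum_diff_mean_eq_0:
  fixes y :: "'a \<Rightarrow> real"
  assumes "finite A" "A \<noteq> {}"
  shows "(\<Sum>a\<in>A. y a - (\<Sum>a\<in>A. y a) / real (card A)) = 0"
  using assms by (simp add: sum_subtractf)

lemma sum_sq_eq_sum_sq_diff_mean: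
  fixes y :: "'a \<Rightarrow> real"
  assumes "finite A" "A \<noteq> {}"
  shows "(\<Sum>a\<in>A. (y a)^2)
    = (\<Sum>a\<in>A. (y a - (\<Sum>a\<in>A. y a) / real (card A))^2) + (\<Sum>a\<in>A. y a)^2 / real (card A)"
proof -
  define \<mu> where "\<mu> = (\<Sum>a\<in>A. y a) / real (card A)"
  have "(\<Sum>a\<in>A. (y a)^2) = (\<Sum>a\<in>A. (y a - \<mu>)^2 + 2 * \<mu> * (y a - \<mu>) + \<mu>^2)"
    by (intro sum.cong) (auto simp: power2_eq_square algebra_simps)
  also have "\<dots> = (\<Sum>a\<in>A. (y a - \<mu>)^2) + 2 * \<mu> * (\<Sum>a\<in>A. y a - \<mu>) + real (card A) * \<mu>^2"
    by (simp add: sum.distrib sum_distrib_left)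
  also have "\<dots> = (\<Sum>a\<in>A. (y a - \<mu>)^2) + (\<Sum>a\<in>A. y a)^2 / real (card A)"
    using sum_diff_mean_eq_0[OF assms, of y] assms by (simp add: \<mu>_def power2_eq_square)
  finally show ?thesis
    unfolding \<mu>_def .
qed

text \<open>With \<open>z\<close> the deviations of the counts from their mean and \<open>w b\<close> the sum of \<open>z a\<close> over
  the \<open>a\<close> incident to \<open>b\<close>, one has \<open>\<Sum> z\<^sup>2 = \<Sum>\<^sub>b\<^sub>\<in>\<^sub>S w b\<close>; Cauchy-Schwarz over \<open>S\<close> and
  \<open>sum_sq_incident_sum_eq\<close> (where \<open>\<Sum> z = 0\<close>) give \<open>(\<Sum> z\<^sup>2)\<^sup>2 \<le> |S| (k - l) \<Sum> z\<^sup>2\<close>.\<close>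
lemma sum_sq_card_incident_le:
  assumes "finite A" "finite B" "S \<subseteq> B" "A \<noteq> {}"
    and deg: "\<And>a. a \<in> A \<Longrightarrow> card {b\<in>B. I a b} = k"
    and codeg: "\<And>a a'. a \<in> A \<Longrightarrow> a' \<in> A \<Longrightarrow> a \<noteq> a' \<Longrightarrow> card {b\<in>B. I a b \<and> I a' b} = l"
    and "l \<le> k"
  shows "(\<Sum>a\<in>A. real (card {b\<in>S. I a b})^2)
     \<le> (\<Sum>a\<in>A. real (card {b\<in>S. I a b}))^2 / real (card A) + (real k - real l) * real (card S)"
proof -
  have "finite S"
    using assms(2,3) finite_subset by blast
  define y where "y a = real (card {b\<in>S. I a b})" for a
  define \<mu> where "\<mu> = (\<Sum>a\<in>A. y a) / real (card A)"
  define z where "z a = y a - \<mu>" for a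
  define w where "w b = (\<Sum>a\<in>A. if I a b then z a else 0)" for b
  define T where "T = (\<Sum>a\<in>A. (z a)^2)"
  have z_sum: "(\<Sum>a\<in>A. z a) = 0"
    unfolding z_def \<mu>_def by (rule sum_diff_mean_eq_0[OF assms(1,4)])
  have "T = (\<Sum>a\<in>A. z a * y a - \<mu> * z a)"
    unfolding T_def by (intro sum.cong) (auto simp: z_def power2_eq_square algebra_simps)
  also have "\<dots> = (\<Sum>a\<in>A. z a * y a) - \<mu> * (\<Sum>a\<in>A. z a)"
    by (simp add: sum_subtractf sum_distrib_left)
  also have "\<dots> = (\<Sum>a\<in>A. \<Sum>b\<in>S. if I a b then z a else 0)"
    using z_sum \<open>finite S\<close> by (simp add: y_def sum.If_cases Int_def mult.commute)
  also have "\<dots> = (\<Sum>b\<in>S. w b)"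
    unfolding w_def by (rule sum.swap)
  finally have "T^2 = (\<Sum>b\<in>S. w b)^2"
    by simp
  also have "\<dots> \<le> (\<Sum>b\<in>S. (w b)^2) * real (card S)"
    by (rule sum_squared_le_sum_of_squares)
  also have "\<dots> \<le> (\<Sum>b\<in>B. (w b)^2) * real (card S)"
    by (intro mult_right_mono sum_mono2 assms) auto
  also have "\<dots> = (real k - real l) * T * real (card S)"
    using sum_sq_incident_sum_eq[OF assms(1,2) deg codeg, where z = z] z_sum unfolding w_def T_def by simp
  finally have "T^2 \<le> (real k - real l) * real (card S) * T"
    by (simp add: mult_ac)
  moreover have "T \<ge> 0"
    unfolding T_def by (rule sum_nonneg) auto
  ultimately have "T \<le> (real k - real l) * real (card S)"
    using \<open>l \<le> k\<close> by (cases "T = 0") (auto simp: power2_eq_square)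
  then show ?thesis
    using sum_sq_eq_sum_sq_diff_mean[OF assms(1,4), of y] unfolding T_def z_def \<mu>_def y_def by simp
qed

lemma lower_order_terms_le:
  fixes r m \<sigma> :: real
  assumes r: "2 \<le> r" and m: "r + 1 \<le> m" and "0 \<le> \<sigma>"
  shows "(r + 1) * m * \<sigma> / r + (m - 1) * r * \<sigma> \<le> 3 * ((r + 1) * (m - 1) * \<sigma>)"
proof -
  have "m \<le> 2 * (m - 1)"
    using r m by simp
  also have "\<dots> \<le> 2 * r * (m - 1)"
    using r m by (intro mult_right_mono) simp_all
  finally have "m / r \<le> 2 * (m - 1)"
    using r by (simp add: divide_le_eq mult_ac)
  have "(r + 1) * m * \<sigma> / r = (r + 1) * \<sigma> * (m / r)"
    by (simp add: mult_ac)
  also have "\<dots> \<le> (r + 1) * \<sigma> * (2 * (m - 1))"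
    using \<open>m / r \<le> 2 * (m - 1)\<close> r \<open>0 \<le> \<sigma>\<close> by (intro mult_left_mono) simp_all
  also have "\<dots> = 2 * ((r + 1) * (m - 1) * \<sigma>)"
    by (simp add: algebra_simps)
  finally have "(r + 1) * m * \<sigma> / r \<le> 2 * ((r + 1) * (m - 1) * \<sigma>)" .
  moreover have "(m - 1) * r * \<sigma> \<le> (r + 1) * (m - 1) * \<sigma>"
    using r m \<open>0 \<le> \<sigma>\<close> by (intro mult_right_mono) simp_all
  ultimately show ?thesis
    by linarith
qed

lemma internal_edges_arith:
  fixes r m \<sigma> n e :: real
  assumes r: "2 \<le> r" and m: "r + 1 \<le> m" and \<sigma>: "1 \<le> \<sigma>" "\<sigma> \<le> n"
    and lines: "r * (r * (r + 1) * \<sigma> + e) \<le> (r + 1) * m * (r^2 * \<sigma>^2 / n + \<sigma>) + (m - 1) * r^2 * \<sigma>"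
  shows "e \<le> \<sigma> * (r * (r + 1) * (m - 1)) * \<sigma> / n + 3 * (\<sigma> * (r * (r + 1) * (m - 1))) / r"
proof -
  define D where "D = \<sigma> * (r * (r + 1) * (m - 1))"
  have "(r + 1) * m * (r^2 * \<sigma>^2 / n + \<sigma>) + (m - 1) * r^2 * \<sigma>
      = r * ((r + 1) * m * r * \<sigma>^2 / n + (r + 1) * m * \<sigma> / r + (m - 1) * r * \<sigma>)"
    using r \<sigma> by (simp add: field_simps power2_eq_square)
  with lines have "r * (r * (r + 1) * \<sigma> + e)
      \<le> r * ((r + 1) * m * r * \<sigma>^2 / n + (r + 1) * m * \<sigma> / r + (m - 1) * r * \<sigma>)"
    by (simp only:)
  then have "r * (r + 1) * \<sigma> + e \<le> (r + 1) * m * r * \<sigma>^2 / n + (r + 1) * m * \<sigma> / r + (m - 1) * r * \<sigma>"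
    using r by simp
  moreover have "(r + 1) * m * r * \<sigma>^2 / n = D * \<sigma> / n + r * (r + 1) * \<sigma> * (\<sigma> / n)"
    unfolding D_def using \<sigma> by (simp add: field_simps power2_eq_square)
  moreover have "r * (r + 1) * \<sigma> * (\<sigma> / n) \<le> r * (r + 1) * \<sigma>"
    using \<sigma> r by (intro mult_left_le) simp_all
  moreover have "3 * D / r = 3 * ((r + 1) * (m - 1) * \<sigma>)"
    unfolding D_def using r by simp
  ultimately show ?thesis
    using lower_order_terms_le[OF r m, of \<sigma>] \<sigma> unfolding D_def[symmetric] by linarith
qed

locale affine_incidence_geometry =
  fixes Ls :: "'p::finite set set" and Ps :: "'p set set" and q t :: nat
  assumes card_UNIV: "card (UNIV :: 'p set) = q^t"
    and q_ge_2: "2 \<le> q" and t_ge_3: "3 \<le> t"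
    and card_line: "L \<in> Ls \<Longrightarrow> card L = q"
    and card_plane: "P \<in> Ps \<Longrightarrow> card P = q^2"
    and line_through: "x \<noteq> y \<Longrightarrow> \<exists>L\<in>Ls. x \<in> L \<and> y \<in> L"
    and line_unique: "\<lbrakk>L \<in> Ls; L' \<in> Ls; x \<in> L; y \<in> L; x \<in> L'; y \<in> L'; x \<noteq> y\<rbrakk> \<Longrightarrow> L = L'"
    and plane_through: "\<lbrakk>L \<in> Ls; y \<notin> L\<rbrakk> \<Longrightarrow> \<exists>P\<in>Ps. L \<subseteq> P \<and> y \<in> P"
    and plane_unique: "\<lbrakk>L \<in> Ls; y \<notin> L; P \<in> Ps; Q \<in> Ps; L \<subseteq> P; y \<in> P; L \<subseteq> Q; y \<in> Q\<rbrakk> \<Longrightarrow> P = Q"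
    and line_subset_plane: "\<lbrakk>P \<in> Ps; L \<in> Ls; x \<in> L; y \<in> L; x \<noteq> y; x \<in> P; y \<in> P\<rbrakk> \<Longrightarrow> L \<subseteq> P"
begin

text \<open>The divisions below are exact: \<open>card_lines_through_point\<close>, \<open>card_planes_through_line\<close> and
  \<open>card_planes_through_point\<close> identify these numbers with the corresponding counts.\<close>

definition lines_per_point :: nat where
  "lines_per_point = (q^t - 1) div (q - 1)"

definition planes_per_line :: nat where
  "planes_per_line = (q^t - q) div (q^2 - q)"

definition planes_per_point :: nat where
  "planes_per_point = lines_per_point * planes_per_line div (q + 1)"

lemma q_sq_gt_q: "q < q^2"
  using q_ge_2 by (simp add: power2_eq_square)

lemma card_lines_through_point: "card {L\<in>Ls. x \<in> L} = lines_per_point"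
proof -
  have cover: "UNIV - {x} = (\<Union>L\<in>{L\<in>Ls. x \<in> L}. L - {x})"
  proof (intro equalityI subsetI)
    fix y assume y: "y \<in> UNIV - {x}"
    then obtain L where "L \<in> Ls" "x \<in> L" "y \<in> L"
      using line_through[of x y] by auto
    with y show "y \<in> (\<Union>L\<in>{L\<in>Ls. x \<in> L}. L - {x})" by blast
  qed blast
  have "card {L\<in>Ls. x \<in> L} * (q - 1) = card (UNIV - {x})"
    unfolding cover
  proof (rule card_UN_disjoint_const[symmetric])
    show "L = L'" if "L \<in> {L\<in>Ls. x \<in> L}" "L' \<in> {L\<in>Ls. x \<in> L}" "y \<in> L - {x}" "y \<in> L' - {x}"
      for L L' y
      using that line_unique[of L L' x y] by blast
  qed (auto simp: card_line)
  also have "\<dots> = q^t - 1"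
    using card_UNIV by simp
  finally have "card {L\<in>Ls. x \<in> L} * (q - 1) = q^t - 1" .
  moreover have "0 < q - 1"
    using q_ge_2 by simp
  ultimately show ?thesis
    unfolding lines_per_point_def by (metis div_mult_self_is_m)
qed

lemma card_planes_through_line:
  assumes L: "L \<in> Ls" shows "card {P\<in>Ps. L \<subseteq> P} = planes_per_line"
proof -
  have cover: "UNIV - L = (\<Union>P\<in>{P\<in>Ps. L \<subseteq> P}. P - L)"
  proof (intro equalityI subsetI)
    fix y assume y: "y \<in> UNIV - L"
    then obtain P where "P \<in> Ps" "L \<subseteq> P" "y \<in> P"
      using plane_through[OF L, of y] by auto
    with y show "y \<in> (\<Union>P\<in>{P\<in>Ps. L \<subseteq> P}. P - L)" by blast
  qed blast
  have "card {P\<in>Ps. L \<subseteq> P} * (q^2 - q) = card (UNIV - L)"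
    unfolding cover
  proof (rule card_UN_disjoint_const[symmetric])
    show "P = Q" if "P \<in> {P\<in>Ps. L \<subseteq> P}" "Q \<in> {P\<in>Ps. L \<subseteq> P}" "y \<in> P - L" "y \<in> Q - L"
      for P Q y
      using that plane_unique[OF L, of y P Q] by blast
  qed (auto simp: card_Diff_subset card_line[OF L] card_plane)
  also have "\<dots> = q^t - q"
    using card_UNIV card_line[OF L] by (simp add: card_Diff_subset)
  finally have "card {P\<in>Ps. L \<subseteq> P} * (q^2 - q) = q^t - q" .
  moreover have "0 < q^2 - q"
    using q_sq_gt_q by simp
  ultimately show ?thesis
    unfolding planes_per_line_def by (metis div_mult_self_is_m)
qed

lemma card_lines_through_point_in_plane:
  assumes P: "P \<in> Ps" and x: "x \<in> P"
  shows "card {L\<in>Ls. x \<in> L \<and> L \<subseteq> P} = q + 1"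
proof -
  have cover: "P - {x} = (\<Union>L\<in>{L\<in>Ls. x \<in> L \<and> L \<subseteq> P}. L - {x})"
  proof (intro equalityI subsetI)
    fix y assume y: "y \<in> P - {x}"
    then obtain L where "L \<in> Ls" "x \<in> L" "y \<in> L"
      using line_through[of x y] by auto
    with y show "y \<in> (\<Union>L\<in>{L\<in>Ls. x \<in> L \<and> L \<subseteq> P}. L - {x})"
      using line_subset_plane[OF P, of L x y] x by blast
  qed blast
  have "card {L\<in>Ls. x \<in> L \<and> L \<subseteq> P} * (q - 1) = card (P - {x})"
    unfolding cover
  proof (rule card_UN_disjoint_const[symmetric])
    show "L = L'" if "L \<in> {L\<in>Ls. x \<in> L \<and> L \<subseteq> P}" "L' \<in> {L\<in>Ls. x \<in> L \<and> L \<subseteq> P}"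
      "y \<in> L - {x}" "y \<in> L' - {x}" for L L' y
      using that line_unique[of L L' x y] by blast
  qed (auto simp: card_line)
  also have "\<dots> = (q + 1) * (q - 1)"
    using card_plane[OF P] x by (simp add: power2_eq_square algebra_simps)
  finally have "card {L\<in>Ls. x \<in> L \<and> L \<subseteq> P} * (q - 1) = (q + 1) * (q - 1)" .
  moreover have "q - 1 \<noteq> 0"
    using q_ge_2 by simp
  ultimately show ?thesis
    by (metis mult_right_cancel)
qed

lemma card_lines_in_plane:
  assumes P: "P \<in> Ps" shows "card {L\<in>Ls. L \<subseteq> P} = q * (q + 1)"
proof -
  have "{L\<in>{L\<in>Ls. L \<subseteq> P}. x \<in> L} = {L\<in>Ls. x \<in> L \<and> L \<subseteq> P}" for x
    by blast
  then have "(\<Sum>L\<in>{L\<in>Ls. L \<subseteq> P}. card {x\<in>P. x \<in> L}) = (q + 1) * card P"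
    by (intro sum_multicount) (simp_all add: card_lines_through_point_in_plane[OF P])
  moreover have "{x\<in>P. x \<in> L} = L" if "L \<subseteq> P" for L
    using that by blast
  then have "(\<Sum>L\<in>{L\<in>Ls. L \<subseteq> P}. card {x\<in>P. x \<in> L}) = card {L\<in>Ls. L \<subseteq> P} * q"
    by (simp add: card_line)
  ultimately have "card {L\<in>Ls. L \<subseteq> P} * q = q * (q + 1) * q"
    using card_plane[OF P] by (simp add: power2_eq_square algebra_simps)
  then show ?thesis
    using q_ge_2 by simp
qed

lemma card_planes_through_point_mult:
  "card {P\<in>Ps. x \<in> P} * (q + 1) = lines_per_point * planes_per_line"
proof -
  have "{L\<in>{L\<in>Ls. x \<in> L}. L \<subseteq> P} = {L\<in>Ls. x \<in> L \<and> L \<subseteq> P}" for P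
    by blast
  then have "(\<Sum>L\<in>{L\<in>Ls. x \<in> L}. card {P\<in>{P\<in>Ps. x \<in> P}. L \<subseteq> P}) = (q + 1) * card {P\<in>Ps. x \<in> P}"
    by (intro sum_multicount) (simp_all add: card_lines_through_point_in_plane)
  moreover have "{P\<in>{P\<in>Ps. x \<in> P}. L \<subseteq> P} = {P\<in>Ps. L \<subseteq> P}" if "x \<in> L" for L
    using that by blast
  then have "(\<Sum>L\<in>{L\<in>Ls. x \<in> L}. card {P\<in>{P\<in>Ps. x \<in> P}. L \<subseteq> P}) = lines_per_point * planes_per_line"
    by (simp add: card_planes_through_line card_lines_through_point)
  ultimately show ?thesis
    by (simp add: mult.commute)
qed

lemma card_planes_through_point: "card {P\<in>Ps. x \<in> P} = planes_per_point"
proof -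
  have "card {P\<in>Ps. x \<in> P} = card {P\<in>Ps. x \<in> P} * (q + 1) div (q + 1)"
    by (rule div_mult_self_is_m[symmetric]) simp
  also have "\<dots> = planes_per_point"
    unfolding planes_per_point_def card_planes_through_point_mult ..
  finally show ?thesis .
qed

lemma planes_per_point_mult: "planes_per_point * (q + 1) = lines_per_point * planes_per_line"
  using card_planes_through_point_mult card_planes_through_point by metis

lemma card_planes_mult: "card Ps * q^2 = q^t * planes_per_point"
proof -
  have "(\<Sum>x\<in>UNIV. card {P\<in>Ps. x \<in> P}) = q^2 * card Ps"
    by (intro sum_multicount) (simp_all add: card_plane)
  then show ?thesis
    by (simp add: card_planes_through_point card_UNIV mult.commute)
qed

lemma lines_per_point_ge: "q + 1 \<le> lines_per_point"
proof -
  have "q + 1 = (q + 1) * (q - 1) div (q - 1)"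
    using q_ge_2 by (intro div_mult_self_is_m[symmetric]) simp
  also have "\<dots> \<le> lines_per_point"
    unfolding lines_per_point_def
  proof (rule div_le_mono)
    have "(q + 1) * (q - 1) = q^2 - 1"
      using q_ge_2 by (simp add: power2_eq_square algebra_simps)
    also have "\<dots> \<le> q^t - 1"
      using power_increasing[of 2 t q] t_ge_3 q_ge_2 by (intro diff_le_mono) simp
    finally show "(q + 1) * (q - 1) \<le> q^t - 1" .
  qed
  finally show ?thesis .
qed

lemma planes_per_line_ge: "q + 1 \<le> planes_per_line"
proof -
  have "q + 1 = (q + 1) * (q^2 - q) div (q^2 - q)"
    using q_sq_gt_q by (intro div_mult_self_is_m[symmetric]) simp
  also have "\<dots> \<le> planes_per_line"
    unfolding planes_per_line_def
  proof (rule div_le_mono)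
    have "(q + 1) * (q^2 - q) = q^3 - q"
      using q_ge_2 by (simp add: power2_eq_square power3_eq_cube algebra_simps)
    also have "\<dots> \<le> q^t - q"
      using power_increasing[of 3 t q] t_ge_3 q_ge_2 by (intro diff_le_mono) simp
    finally show "(q + 1) * (q^2 - q) \<le> q^t - q" .
  qed
  finally show ?thesis .
qed

lemma planes_per_line_le_planes_per_point: "planes_per_line \<le> planes_per_point"
proof -
  have "planes_per_line * (q + 1) \<le> planes_per_line * lines_per_point"
    using lines_per_point_ge by (rule mult_le_mono2)
  also have "\<dots> = planes_per_point * (q + 1)"
    using planes_per_point_mult by (simp add: mult.commute)
  finally show ?thesis
    by (rule mult_right_le_imp_le) simp
qed

lemma card_planes_through_two_points:
  assumes "x \<noteq> y" shows "card {P\<in>Ps. x \<in> P \<and> y \<in> P} = planes_per_line"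
proof -
  obtain L where L: "L \<in> Ls" "x \<in> L" "y \<in> L"
    using line_through[OF assms] by auto
  have "{P\<in>Ps. x \<in> P \<and> y \<in> P} = {P\<in>Ps. L \<subseteq> P}"
    using line_subset_plane[OF _ L assms] L by blast
  then show ?thesis
    using card_planes_through_line[OF L(1)] by simp
qed

lemma plane_inter_eq_line:
  assumes "P \<in> Ps" "Q \<in> Ps" "P \<noteq> Q" "L \<in> Ls" "L \<subseteq> P" "L \<subseteq> Q"
  shows "P \<inter> Q = L"
  using plane_unique[OF assms(4), of _ P Q] assms by blast

lemma card_planes_through_two_lines:
  assumes L: "L \<in> Ls" "L' \<in> Ls" "L \<noteq> L'" and x: "x \<in> L" "x \<in> L'"
  shows "card {P\<in>Ps. L \<subseteq> P \<and> L' \<subseteq> P} = 1"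
proof -
  have "card (L' - {x}) \<noteq> 0"
    using card_line[OF L(2)] x q_ge_2 by simp
  then have "L' - {x} \<noteq> {}"
    by (metis card.empty)
  then obtain y where y: "y \<in> L'" "y \<noteq> x"
    by blast
  have "y \<notin> L"
    using line_unique[OF L(1,2) x(1) _ x(2) y(1)] y L(3) by auto
  then obtain P where P: "P \<in> Ps" "L \<subseteq> P" "y \<in> P"
    using plane_through[OF L(1)] by blast
  then have "L' \<subseteq> P"
    using line_subset_plane[OF P(1) L(2) x(2) y(1)] y x by blast
  then have "{P\<in>Ps. L \<subseteq> P \<and> L' \<subseteq> P} = {P}"
    using P plane_unique[OF L(1) \<open>y \<notin> L\<close>, of _ P] y by blast
  then show ?thesis
    by simp
qed

lemma plane_not_line: "P \<in> Ps \<Longrightarrow> P \<notin> Ls"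
  using card_line card_plane q_sq_gt_q by (metis less_irrefl)

lemma card_common_lines:
  assumes P: "P \<in> Ps" and Q: "Q \<in> Ps"
  shows "card {L\<in>Ls. L \<subseteq> P \<and> L \<subseteq> Q} = (if P = Q then q * (q + 1) else if P \<inter> Q \<in> Ls then 1 else 0)"
proof (cases "P = Q")
  case True
  then show ?thesis
    using card_lines_in_plane[OF P] by simp
next
  case False
  then have "{L\<in>Ls. L \<subseteq> P \<and> L \<subseteq> Q} = {L\<in>Ls. L = P \<inter> Q}"
    using plane_inter_eq_line[OF P Q] by blast
  then show ?thesis
    using False by (simp add: Collect_conj_eq)
qed

lemma card_adjacent_planes:
  assumes P: "P \<in> Ps" shows "card {Q\<in>Ps. P \<inter> Q \<in> Ls} = q * (q + 1) * (planes_per_line - 1)"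
proof -
  have cover: "{Q\<in>Ps. P \<inter> Q \<in> Ls} = (\<Union>L\<in>{L\<in>Ls. L \<subseteq> P}. {Q\<in>Ps. L \<subseteq> Q} - {P})"
  proof (intro equalityI subsetI)
    fix Q assume Q: "Q \<in> {Q\<in>Ps. P \<inter> Q \<in> Ls}"
    then have "Q \<noteq> P"
      using plane_not_line[OF P] by auto
    with Q have "P \<inter> Q \<in> {L\<in>Ls. L \<subseteq> P}" "Q \<in> {Q'\<in>Ps. P \<inter> Q \<subseteq> Q'} - {P}"
      by auto
    then show "Q \<in> (\<Union>L\<in>{L\<in>Ls. L \<subseteq> P}. {Q\<in>Ps. L \<subseteq> Q} - {P})"
      by (rule UN_I)
  next
    fix Q assume "Q \<in> (\<Union>L\<in>{L\<in>Ls. L \<subseteq> P}. {Q\<in>Ps. L \<subseteq> Q} - {P})"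
    then obtain L where "L \<in> Ls" "L \<subseteq> P" "Q \<in> Ps" "L \<subseteq> Q" "Q \<noteq> P"
      by blast
    then show "Q \<in> {Q\<in>Ps. P \<inter> Q \<in> Ls}"
      using plane_inter_eq_line[OF P, of Q L] by auto
  qed
  have "card (\<Union>L\<in>{L\<in>Ls. L \<subseteq> P}. {Q\<in>Ps. L \<subseteq> Q} - {P}) = card {L\<in>Ls. L \<subseteq> P} * (planes_per_line - 1)"
  proof (rule card_UN_disjoint_const)
    show "L = L'" if "L \<in> {L\<in>Ls. L \<subseteq> P}" "L' \<in> {L\<in>Ls. L \<subseteq> P}"
      "Q \<in> {Q\<in>Ps. L \<subseteq> Q} - {P}" "Q \<in> {Q\<in>Ps. L' \<subseteq> Q} - {P}" for L L' Q
      using that plane_inter_eq_line[OF P, of Q L] plane_inter_eq_line[OF P, of Q L'] by auto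
  qed (auto simp: card_planes_through_line P card_Diff_singleton)
  then show ?thesis
    using cover card_lines_in_plane[OF P] by simp
qed

lemma sum_card_planes_through_point:
  assumes "S \<subseteq> Ps" shows "(\<Sum>x\<in>UNIV. card {P\<in>S. x \<in> P}) = q^2 * card S"
proof (rule sum_multicount)
  show "\<forall>P\<in>S. card {x\<in>UNIV. x \<in> P} = q^2"
    using assms card_plane by auto
qed simp_all

text \<open>Both sides count the triples \<open>(L, P, Q)\<close> with \<open>P, Q \<in> S\<close> and \<open>L \<subseteq> P \<inter> Q\<close>.\<close>
lemma sum_sq_card_planes_through_line:
  assumes "S \<subseteq> Ps"
  shows "(\<Sum>L\<in>Ls. card {P\<in>S. L \<subseteq> P}^2)
       = q * (q + 1) * card S + card {(P, Q). P \<in> S \<and> Q \<in> S \<and> P \<inter> Q \<in> Ls}"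
proof -
  have "card {P\<in>S. L \<subseteq> P}^2 = card {PQ\<in>S \<times> S. L \<subseteq> fst PQ \<and> L \<subseteq> snd PQ}" for L
  proof -
    have "card {P\<in>S. L \<subseteq> P}^2 = card ({P\<in>S. L \<subseteq> P} \<times> {P\<in>S. L \<subseteq> P})"
      by (simp add: power2_eq_square card_cartesian_product)
    also have "{P\<in>S. L \<subseteq> P} \<times> {P\<in>S. L \<subseteq> P} = {PQ\<in>S \<times> S. L \<subseteq> fst PQ \<and> L \<subseteq> snd PQ}"
      by auto
    finally show ?thesis .
  qed
  then have "(\<Sum>L\<in>Ls. card {P\<in>S. L \<subseteq> P}^2)
      = (\<Sum>L\<in>Ls. card {PQ\<in>S \<times> S. L \<subseteq> fst PQ \<and> L \<subseteq> snd PQ})"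
    by simp
  also have "\<dots> = (\<Sum>PQ\<in>S \<times> S. card {L\<in>Ls. L \<subseteq> fst PQ \<and> L \<subseteq> snd PQ})"
    by (rule sum_multicount_gen[where R = "\<lambda>L PQ. L \<subseteq> fst PQ \<and> L \<subseteq> snd PQ"]) simp_all
  also have "\<dots> = (\<Sum>PQ\<in>S \<times> S. (if fst PQ = snd PQ then q * (q + 1) else 0)
                                + (if fst PQ \<inter> snd PQ \<in> Ls then 1 else 0))"
  proof (rule sum.cong[OF refl])
    fix PQ assume "PQ \<in> S \<times> S"
    then have "fst PQ \<in> Ps" "snd PQ \<in> Ps"
      using assms by auto
    then show "card {L\<in>Ls. L \<subseteq> fst PQ \<and> L \<subseteq> snd PQ}
        = (if fst PQ = snd PQ then q * (q + 1) else 0) + (if fst PQ \<inter> snd PQ \<in> Ls then 1 else 0)"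
      using card_common_lines plane_not_line by simp
  qed
  also have "\<dots> = q * (q + 1) * card S + card {(P, Q). P \<in> S \<and> Q \<in> S \<and> P \<inter> Q \<in> Ls}"
  proof -
    have "(\<Sum>PQ\<in>S \<times> S. if fst PQ = snd PQ then q * (q + 1) else 0)
        = (\<Sum>P\<in>S. \<Sum>Q\<in>S. if P = Q then q * (q + 1) else 0)"
      by (simp only: sum.cartesian_product split_def)
    also have "\<dots> = q * (q + 1) * card S"
      by simp
    moreover have "(\<Sum>PQ\<in>S \<times> S. if fst PQ \<inter> snd PQ \<in> Ls then 1 else 0)
        = card {PQ\<in>S \<times> S. fst PQ \<inter> snd PQ \<in> Ls}"
      by (simp add: sum.If_cases Int_def)
    moreover have "{PQ\<in>S \<times> S. fst PQ \<inter> snd PQ \<in> Ls} = {(P, Q). P \<in> S \<and> Q \<in> S \<and> P \<inter> Q \<in> Ls}"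
      by auto
    ultimately show ?thesis
      by (simp add: sum.distrib)
  qed
  finally show ?thesis .
qed

lemma lines_through_point_nonempty: "{L\<in>Ls. x \<in> L} \<noteq> {}"
proof -
  have "card {L\<in>Ls. x \<in> L} \<noteq> 0"
    using lines_per_point_ge card_lines_through_point[of x] by simp
  then show ?thesis
    by (rule contrapos_nn) simp
qed

lemma sum_card_planes_through_lines_through_point:
  assumes "S \<subseteq> Ps"
  shows "(\<Sum>L\<in>{L\<in>Ls. x \<in> L}. card {P\<in>{P\<in>S. x \<in> P}. L \<subseteq> P}) = (q + 1) * card {P\<in>S. x \<in> P}"
proof (rule sum_multicount)
  have "{L\<in>{L\<in>Ls. x \<in> L}. L \<subseteq> P} = {L\<in>Ls. x \<in> L \<and> L \<subseteq> P}" for P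
    by blast
  then show "\<forall>P\<in>{P\<in>S. x \<in> P}. card {L\<in>{L\<in>Ls. x \<in> L}. L \<subseteq> P} = q + 1"
    using assms card_lines_through_point_in_plane by auto
qed simp_all

lemma sum_sq_card_planes_through_lines_through_point_le:
  assumes S: "S \<subseteq> Ps"
  shows "(\<Sum>L\<in>{L\<in>Ls. x \<in> L}. real (card {P\<in>S. L \<subseteq> P})^2)
    \<le> (real (q + 1) * real (card {P\<in>S. x \<in> P}))^2 / real lines_per_point
       + (real planes_per_line - 1) * real (card {P\<in>S. x \<in> P})"
proof -
  let ?Lx = "{L\<in>Ls. x \<in> L}" and ?Px = "{P\<in>Ps. x \<in> P}" and ?Sx = "{P\<in>S. x \<in> P}"
  have restrict: "{P\<in>?Sx. L \<subseteq> P} = {P\<in>S. L \<subseteq> P}" if "L \<in> ?Lx" for L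
    using that by blast
  have second_moment: "(\<Sum>L\<in>?Lx. real (card {P\<in>?Sx. L \<subseteq> P})^2)
      \<le> (\<Sum>L\<in>?Lx. real (card {P\<in>?Sx. L \<subseteq> P}))^2 / real (card ?Lx)
         + (real planes_per_line - real 1) * real (card ?Sx)"
  proof (rule sum_sq_card_incident_le[where B = ?Px])
    show "card {P\<in>?Px. L \<subseteq> P} = planes_per_line" if "L \<in> ?Lx" for L
    proof -
      have "{P\<in>?Px. L \<subseteq> P} = {P\<in>Ps. L \<subseteq> P}"
        using that by blast
      then show ?thesis
        using that card_planes_through_line by simp
    qed
    show "card {P\<in>?Px. L \<subseteq> P \<and> L' \<subseteq> P} = 1" if "L \<in> ?Lx" "L' \<in> ?Lx" "L \<noteq> L'" for L L'
    proof -
      have "{P\<in>?Px. L \<subseteq> P \<and> L' \<subseteq> P} = {P\<in>Ps. L \<subseteq> P \<and> L' \<subseteq> P}"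
        using that by blast
      then show ?thesis
        using that card_planes_through_two_lines[of L L' x] by simp
    qed
  qed (use S planes_per_line_ge lines_through_point_nonempty in auto)
  have sum_eq: "(\<Sum>L\<in>?Lx. real (card {P\<in>?Sx. L \<subseteq> P})) = real (q + 1) * real (card ?Sx)"
    using sum_card_planes_through_lines_through_point[OF S]
    by (simp only: of_nat_sum[symmetric] of_nat_mult[symmetric])
  have "(\<Sum>L\<in>?Lx. real (card {P\<in>S. L \<subseteq> P})^2) = (\<Sum>L\<in>?Lx. real (card {P\<in>?Sx. L \<subseteq> P})^2)"
    by (rule sum.cong[OF refl]) (simp only: restrict)
  also note second_moment
  also have "(\<Sum>L\<in>?Lx. real (card {P\<in>?Sx. L \<subseteq> P}))^2 / real (card ?Lx)
         + (real planes_per_line - real 1) * real (card ?Sx)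
      = (real (q + 1) * real (card ?Sx))^2 / real lines_per_point
         + (real planes_per_line - 1) * real (card ?Sx)"
    unfolding sum_eq card_lines_through_point by simp
  finally show ?thesis .
qed

lemma sum_sq_card_planes_through_point_le:
  assumes S: "S \<subseteq> Ps"
  shows "(\<Sum>x\<in>UNIV. real (card {P\<in>S. x \<in> P})^2)
    \<le> real planes_per_point * (real q^2 * real (card S)^2 / real (card Ps) + real (card S))"
proof -
  have "(\<Sum>x\<in>UNIV. real (card {P\<in>S. x \<in> P})^2)
      \<le> (\<Sum>x\<in>UNIV. real (card {P\<in>S. x \<in> P}))^2 / real (card (UNIV :: 'p set))
         + (real planes_per_point - real planes_per_line) * real (card S)"
    by (rule sum_sq_card_incident_le[where B = Ps])
      (use S card_planes_through_point card_planes_through_two_points planes_per_line_le_planes_per_point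
        in auto)
  also have "(\<Sum>x\<in>UNIV. real (card {P\<in>S. x \<in> P})) = real q^2 * real (card S)"
    using arg_cong[OF sum_card_planes_through_point[OF S], of real] by simp
  also have "(real q^2 * real (card S))^2 / real (card (UNIV :: 'p set))
      = real planes_per_point * (real q^2 * real (card S)^2 / real (card Ps))"
  proof -
    have rel: "real (card Ps) * real q^2 = real q^t * real planes_per_point"
      using arg_cong[OF card_planes_mult, of real] by simp
    have "0 < planes_per_point"
      using planes_per_line_ge planes_per_line_le_planes_per_point by simp
    then have "0 < real (card Ps) * real q^2"
      unfolding rel using q_ge_2 by simp
    then have "real (card Ps) \<noteq> 0"
      by auto
    then have "real q^2 / real q^t = real planes_per_point / real (card Ps)"
      using rel q_ge_2 by (simp add: frac_eq_eq mult.commute)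
    moreover have "(real q^2 * real (card S))^2 / real q^t = real q^2 * real (card S)^2 * (real q^2 / real q^t)"
      by (simp add: power_mult_distrib)
    ultimately show ?thesis
      unfolding card_UNIV by simp
  qed
  also have "real planes_per_point * (real q^2 * real (card S)^2 / real (card Ps))
      + (real planes_per_point - real planes_per_line) * real (card S)
    \<le> real planes_per_point * (real q^2 * real (card S)^2 / real (card Ps) + real (card S))"
    by (simp add: distrib_left left_diff_distrib)
  finally show ?thesis .
qed

lemma sum_sq_card_planes_through_line_le:
  assumes S: "S \<subseteq> Ps"
  shows "real q * (\<Sum>L\<in>Ls. real (card {P\<in>S. L \<subseteq> P})^2)
    \<le> (real q + 1) * real planes_per_line * (real q^2 * real (card S)^2 / real (card Ps) + real (card S))
       + (real planes_per_line - 1) * real q^2 * real (card S)"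
proof -
  let ?d = "\<lambda>L. real (card {P\<in>S. L \<subseteq> P})" and ?r = "\<lambda>x. real (card {P\<in>S. x \<in> P})"
  have "real q * (\<Sum>L\<in>Ls. ?d L^2) = (\<Sum>L\<in>Ls. \<Sum>x\<in>{x\<in>UNIV. x \<in> L}. ?d L^2)"
    by (simp add: sum_distrib_left card_line)
  also have "\<dots> = (\<Sum>x\<in>UNIV. \<Sum>L\<in>{L\<in>Ls. x \<in> L}. ?d L^2)"
    by (rule sum.swap_restrict[symmetric]) simp_all
  also have "\<dots> \<le> (\<Sum>x\<in>UNIV. (real (q + 1) * ?r x)^2 / real lines_per_point
                               + (real planes_per_line - 1) * ?r x)"
    by (rule sum_mono) (rule sum_sq_card_planes_through_lines_through_point_le[OF S])
  also have "\<dots> = (real q + 1)^2 / real lines_per_point * (\<Sum>x\<in>UNIV. ?r x^2)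
                  + (real planes_per_line - 1) * (\<Sum>x\<in>UNIV. ?r x)"
    by (simp add: sum.distrib sum_distrib_left sum_divide_distrib power_mult_distrib add.commute)
  also have "(\<Sum>x\<in>UNIV. ?r x) = real q^2 * real (card S)"
    using arg_cong[OF sum_card_planes_through_point[OF S], of real] by simp
  also have "(real q + 1)^2 / real lines_per_point * (\<Sum>x\<in>UNIV. ?r x^2)
      \<le> (real q + 1)^2 / real lines_per_point * real planes_per_point
         * (real q^2 * real (card S)^2 / real (card Ps) + real (card S))"
    unfolding mult.assoc by (intro mult_left_mono sum_sq_card_planes_through_point_le[OF S]) simp
  also have "(real q + 1)^2 / real lines_per_point * real planes_per_point = (real q + 1) * real planes_per_line"
  proof -
    have "real planes_per_point * (real q + 1) = real lines_per_point * real planes_per_line"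
      using arg_cong[OF planes_per_point_mult, of real] by (simp add: algebra_simps)
    then have "(real q + 1)^2 / real lines_per_point * real planes_per_point
        = (real q + 1) * (real lines_per_point * real planes_per_line) / real lines_per_point"
      by (simp add: power2_eq_square mult_ac)
    also have "\<dots> = (real q + 1) * real planes_per_line"
      using lines_per_point_ge by simp
    finally show ?thesis .
  qed
  finally show ?thesis
    by (simp add: mult.assoc)
qed

lemma card_edges_from:
  assumes "S \<subseteq> Ps"
  shows "card {(P, Q). P \<in> S \<and> Q \<in> Ps \<and> P \<inter> Q \<in> Ls} = card S * (q * (q + 1) * (planes_per_line - 1))"
proof -
  have "{(P, Q). P \<in> S \<and> Q \<in> Ps \<and> P \<inter> Q \<in> Ls} = Sigma S (\<lambda>P. {Q\<in>Ps. P \<inter> Q \<in> Ls})"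
    by auto
  then show ?thesis
    using assms card_adjacent_planes by (simp add: subset_iff)
qed

lemma card_internal_edges_le:
  fixes S defines "D \<equiv> real (card S) * (real q * (real q + 1) * (real planes_per_line - 1))"
  assumes S: "S \<subseteq> Ps" "S \<noteq> {}"
  shows "real (card {(P, Q). P \<in> S \<and> Q \<in> S \<and> P \<inter> Q \<in> Ls})
    \<le> D * real (card S) / real (card Ps) + 3 * D / real q"
  unfolding D_def
proof (rule internal_edges_arith)
  show "2 \<le> real q" "real q + 1 \<le> real planes_per_line"
    using q_ge_2 planes_per_line_ge by simp_all
  show "1 \<le> real (card S)"
    using S(2) finite_subset[OF S(1)] by (simp add: Suc_le_eq card_gt_0_iff)
  show "real (card S) \<le> real (card Ps)"
    using S(1) by (simp add: card_mono)
  have "real (\<Sum>L\<in>Ls. card {P\<in>S. L \<subseteq> P}^2)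
      = real q * (real q + 1) * real (card S) + real (card {(P, Q). P \<in> S \<and> Q \<in> S \<and> P \<inter> Q \<in> Ls})"
    unfolding sum_sq_card_planes_through_line[OF S(1)] by (simp add: algebra_simps)
  then show "real q * (real q * (real q + 1) * real (card S)
        + real (card {(P, Q). P \<in> S \<and> Q \<in> S \<and> P \<inter> Q \<in> Ls}))
      \<le> (real q + 1) * real planes_per_line * (real q^2 * real (card S)^2 / real (card Ps) + real (card S))
        + (real planes_per_line - 1) * real q^2 * real (card S)"
    using sum_sq_card_planes_through_line_le[OF S(1)] by simp
qed

theorem edge_expansion_ge:
  assumes S: "S \<subseteq> Ps" "S \<noteq> {}"
  shows "1 - real (card S) / real (card Ps) - 3 / real q
    \<le> real (card {(P, Q). P \<in> S \<and> Q \<in> Ps \<and> Q \<notin> S \<and> P \<inter> Q \<in> Ls})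
       / real (card {(P, Q). P \<in> S \<and> Q \<in> Ps \<and> P \<inter> Q \<in> Ls})"
proof -
  define E where "E = {(P, Q). P \<in> S \<and> Q \<in> Ps \<and> P \<inter> Q \<in> Ls}"
  define Es where "Es = {(P, Q). P \<in> S \<and> Q \<in> S \<and> P \<inter> Q \<in> Ls}"
  define D where "D = real (card S) * (real q * (real q + 1) * (real planes_per_line - 1))"
  have "Es \<subseteq> E"
    using S(1) by (auto simp: E_def Es_def)
  have leaving: "{(P, Q). P \<in> S \<and> Q \<in> Ps \<and> Q \<notin> S \<and> P \<inter> Q \<in> Ls} = E - Es"
    by (auto simp: E_def Es_def)
  have "real (planes_per_line - 1) = real planes_per_line - 1"
    using planes_per_line_ge by (simp add: of_nat_diff)
  then have card_E: "real (card E) = D"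
    unfolding E_def card_edges_from[OF S(1)] D_def of_nat_mult of_nat_add of_nat_1 by simp
  have "0 < D"
    using S planes_per_line_ge q_ge_2 finite_subset[OF S(1)] unfolding D_def by (simp add: card_gt_0_iff)
  have "1 - real (card S) / real (card Ps) - 3 / real q
      = (D - (D * real (card S) / real (card Ps) + 3 * D / real q)) / D"
    using \<open>0 < D\<close> by (simp add: field_simps)
  also have "\<dots> \<le> (D - real (card Es)) / D"
    using card_internal_edges_le[OF S] \<open>0 < D\<close> unfolding Es_def D_def by (intro divide_right_mono) simp_all
  also have "\<dots> = real (card (E - Es)) / real (card E)"
    using \<open>Es \<subseteq> E\<close> card_E by (simp add: card_Diff_subset finite_subset card_mono of_nat_diff)
  finally show ?thesis
    unfolding leaving E_def .
qed

end

definition aline :: "'a::field ^ 'n \<Rightarrow> 'a ^ 'n \<Rightarrow> ('a ^ 'n) set" where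
  "aline p u = {p + a *s u | a. True}"

definition aplane :: "'a::field ^ 'n \<Rightarrow> 'a ^ 'n \<Rightarrow> 'a ^ 'n \<Rightarrow> ('a ^ 'n) set" where
  "aplane p u v = {p + a *s u + b *s v | a b. True}"

lemma vec_lambda_smult_add: "(\<chi> i. a * u $ i + b * v $ i) = a *s u + b *s v"
  by (simp add: vec_eq_iff)

lemma vec_lambda_add_smult: "(\<chi> i. p $ i + a * u $ i) = p + a *s u"
  by (simp add: vec_eq_iff)

lemma vec_lambda_add_smult2: "(\<chi> i. p $ i + a * u $ i + b * v $ i) = p + a *s u + b *s v"
  by (simp add: vec_eq_iff)

lemma lin_indep2_iff: "lin_indep2 u v \<longleftrightarrow> (\<forall>a b. a *s u + b *s v = 0 \<longrightarrow> a = 0 \<and> b = 0)"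
  unfolding lin_indep2_def vec_lambda_smult_add ..

lemma affine_line_iff: "affine_line L \<longleftrightarrow> (\<exists>p u. u \<noteq> 0 \<and> L = aline p u)"
  unfolding affine_line_def aline_def vec_lambda_add_smult ..

lemma affine_plane_iff: "affine_plane P \<longleftrightarrow> (\<exists>p u v. lin_indep2 u v \<and> P = aplane p u v)"
  unfolding affine_plane_def aplane_def vec_lambda_add_smult2 ..

lemma affine_line_aline: "u \<noteq> 0 \<Longrightarrow> affine_line (aline p u)"
  unfolding affine_line_iff by blast

lemma affine_plane_aplane: "lin_indep2 u v \<Longrightarrow> affine_plane (aplane p u v)"
  unfolding affine_plane_iff by blast

lemma mem_aline_base: "p \<in> aline p u"
  unfolding aline_def by (auto intro: exI[of _ 0])

lemma mem_aline_diff: "y \<in> aline p (y - p)"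
proof -
  have "y = p + 1 *s (y - p)"
    by simp
  then show ?thesis
    unfolding aline_def by blast
qed

lemma aline_subset_aplane: "aline p u \<subseteq> aplane p u v"
proof -
  have "p + a *s u = p + a *s u + 0 *s v" for a
    by simp
  then show ?thesis
    unfolding aline_def aplane_def by blast
qed

lemma mem_aplane_diff: "y \<in> aplane p u (y - p)"
proof -
  have "y = p + 0 *s u + 1 *s (y - p)"
    by simp
  then show ?thesis
    unfolding aplane_def by blast
qed

lemma card_aline:
  fixes u :: "'a::{field,finite} ^ 'n"
  assumes "u \<noteq> 0" shows "card (aline p u) = CARD('a)"
proof -
  have "aline p u = range (\<lambda>a. p + a *s u)"
    unfolding aline_def by auto
  moreover have "inj (\<lambda>a. p + a *s u)"
    using assms by (auto intro: injI)
  ultimately show ?thesis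
    by (simp add: card_image)
qed

lemma card_aplane:
  fixes u v :: "'a::{field,finite} ^ 'n"
  assumes "lin_indep2 u v" shows "card (aplane p u v) = CARD('a)^2"
proof -
  have "aplane p u v = (\<lambda>(a, b). p + a *s u + b *s v) ` UNIV"
    unfolding aplane_def by auto
  moreover have "inj (\<lambda>(a, b). p + a *s u + b *s v)"
  proof (rule injI, clarify)
    fix a b a' b' :: 'a
    assume "p + a *s u + b *s v = p + a' *s u + b' *s v"
    then have "(a - a') *s u + (b - b') *s v = 0"
      by (simp add: vec_eq_iff algebra_simps)
    then have "a - a' = 0 \<and> b - b' = 0"
      using assms unfolding lin_indep2_iff by blast
    then show "a = a' \<and> b = b'"
      by simp
  qed
  ultimately show ?thesis
    by (simp add: card_image UNIV_Times_UNIV[symmetric] card_cartesian_product power2_eq_square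
        del: UNIV_Times_UNIV)
qed

lemma aline_affine_comb:
  assumes "x \<in> aline p u" "y \<in> aline p u" shows "x + c *s (y - x) \<in> aline p u"
proof -
  obtain a b where "x = p + a *s u" "y = p + b *s u"
    using assms unfolding aline_def by auto
  then have "x + c *s (y - x) = p + (a + c * (b - a)) *s u"
    by (simp add: vec_eq_iff algebra_simps)
  then show ?thesis
    unfolding aline_def by auto
qed

lemma affine_plane_affine_comb:
  assumes "affine_plane P" "x \<in> P" "y \<in> P" "z \<in> P"
  shows "x + c *s (y - x) + d *s (z - x) \<in> P"
proof -
  obtain p u v where P: "P = aplane p u v"
    using assms(1) unfolding affine_plane_iff by auto
  obtain a1 b1 a2 b2 a3 b3 where
    "x = p + a1 *s u + b1 *s v" "y = p + a2 *s u + b2 *s v" "z = p + a3 *s u + b3 *s v"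
    using assms(2-4) unfolding P aplane_def by auto
  then have "x + c *s (y - x) + d *s (z - x)
      = p + (a1 + c * (a2 - a1) + d * (a3 - a1)) *s u + (b1 + c * (b2 - b1) + d * (b3 - b1)) *s v"
    by (simp add: vec_eq_iff algebra_simps)
  then show ?thesis
    unfolding P aplane_def by auto
qed

lemma affine_line_eq_aline:
  fixes L :: "('a::{field,finite} ^ 'n) set"
  assumes "affine_line L" "x \<in> L" "y \<in> L" "x \<noteq> y"
  shows "L = aline x (y - x)"
proof -
  obtain p u where L: "u \<noteq> 0" "L = aline p u"
    using assms(1) unfolding affine_line_iff by auto
  have "aline x (y - x) \<subseteq> L"
    using aline_affine_comb[of x p u y] assms(2,3) unfolding L(2) aline_def by auto
  moreover have "card (aline x (y - x)) = card L"
    using assms(4) L card_aline[of "y - x" x] card_aline[of u p] by simp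
  ultimately show ?thesis
    by (intro card_subset_eq[symmetric]) auto
qed

lemma lin_indep2_off_aline:
  assumes "u \<noteq> 0" "y \<notin> aline p u" shows "lin_indep2 u (y - p)"
  unfolding lin_indep2_iff
proof (intro allI impI)
  fix a b :: 'a assume ab: "a *s u + b *s (y - p) = 0"
  have "b = 0"
  proof (rule ccontr)
    assume "b \<noteq> 0"
    with ab have "y = p + (- a / b) *s u"
      by (simp add: vec_eq_iff field_simps)
    with assms(2) show False
      unfolding aline_def by auto
  qed
  with ab assms(1) show "a = 0 \<and> b = 0"
    by simp
qed

lemma affine_plane_eq_aplane:
  fixes P :: "('a::{field,finite} ^ 'n) set"
  assumes "affine_plane P" "u \<noteq> 0" "aline p u \<subseteq> P" "y \<in> P" "y \<notin> aline p u"
  shows "P = aplane p u (y - p)"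
proof -
  have p: "p \<in> P"
    using assms(3) mem_aline_base by blast
  have "p + u \<in> aline p u"
    using mem_aline_diff[of "p + u" p] by simp
  then have pu: "p + u \<in> P"
    using assms(3) by blast
  have "aplane p u (y - p) \<subseteq> P"
    using affine_plane_affine_comb[OF assms(1) p pu assms(4)] unfolding aplane_def by auto
  moreover have "card (aplane p u (y - p)) = card P"
  proof -
    obtain p' u' v' where "lin_indep2 u' v'" "P = aplane p' u' v'"
      using assms(1) unfolding affine_plane_iff by auto
    then show ?thesis
      using card_aplane[of u' v' p'] card_aplane[OF lin_indep2_off_aline[OF assms(2,5)], of p] by simp
  qed
  ultimately show ?thesis
    by (intro card_subset_eq[symmetric]) auto
qed

lemma two_le_card_field: "2 \<le> CARD('a::{field,finite})"
proof -
  have "card {0, 1::'a} \<le> CARD('a)"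
    by (rule card_mono) simp_all
  then show ?thesis
    by simp
qed

lemma affine_plane_through_line:
  assumes "affine_line L" "y \<notin> L"
  shows "\<exists>P. affine_plane P \<and> L \<subseteq> P \<and> y \<in> P"
proof -
  obtain p u where L: "u \<noteq> 0" "L = aline p u"
    using assms(1) unfolding affine_line_iff by auto
  then have "affine_plane (aplane p u (y - p))"
    using assms(2) by (intro affine_plane_aplane lin_indep2_off_aline) simp_all
  then show ?thesis
    using aline_subset_aplane mem_aplane_diff unfolding L(2) by blast
qed

lemma affine_plane_through_line_unique:
  fixes P :: "('a::{field,finite} ^ 'n) set"
  assumes "affine_line L" "y \<notin> L" "affine_plane P" "affine_plane Q" "L \<subseteq> P" "y \<in> P" "L \<subseteq> Q" "y \<in> Q"
  shows "P = Q"
  using assms affine_plane_eq_aplane unfolding affine_line_iff by metis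

lemma affine_line_subset_affine_plane:
  fixes P :: "('a::{field,finite} ^ 'n) set"
  assumes "affine_plane P" "affine_line L" "x \<in> L" "y \<in> L" "x \<noteq> y" "x \<in> P" "y \<in> P"
  shows "L \<subseteq> P"
proof
  fix z assume "z \<in> L"
  then obtain c where "z = x + c *s (y - x) + 0 *s (x - x)"
    using affine_line_eq_aline[OF assms(2-5)] unfolding aline_def by auto
  then show "z \<in> P"
    using affine_plane_affine_comb[OF assms(1,6,7,6)] by simp
qed

lemma affine_incidence_geometry_affine_space:
  assumes "3 \<le> CARD('n)"
  shows "affine_incidence_geometry {L. affine_line L} (pvp_vertices :: ('a::{field,finite} ^ 'n) set set)
    CARD('a) CARD('n)"
proof
  show "card (UNIV :: ('a ^ 'n) set) = CARD('a) ^ CARD('n)"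
    by simp
  show "2 \<le> CARD('a)"
    by (rule two_le_card_field)
  show "3 \<le> CARD('n)"
    by (rule assms)
next
  fix L :: "('a ^ 'n) set" assume "L \<in> {L. affine_line L}"
  then show "card L = CARD('a)"
    unfolding affine_line_iff by (auto simp: card_aline)
next
  fix P :: "('a ^ 'n) set" assume "P \<in> pvp_vertices"
  then show "card P = CARD('a)^2"
    unfolding pvp_vertices_def affine_plane_iff by (auto simp: card_aplane)
next
  fix x y :: "'a ^ 'n" assume "x \<noteq> y"
  then have "affine_line (aline x (y - x))"
    by (simp add: affine_line_aline)
  moreover have "x \<in> aline x (y - x)" "y \<in> aline x (y - x)"
    by (rule mem_aline_base, rule mem_aline_diff)
  ultimately show "\<exists>L\<in>{L. affine_line L}. x \<in> L \<and> y \<in> L"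
    by blast
next
  fix L L' :: "('a ^ 'n) set" and x y
  assume "L \<in> {L. affine_line L}" "L' \<in> {L. affine_line L}" "x \<in> L" "y \<in> L" "x \<in> L'" "y \<in> L'" "x \<noteq> y"
  then show "L = L'"
    using affine_line_eq_aline[of L x y] affine_line_eq_aline[of L' x y] by simp
qed (auto simp: pvp_vertices_def dest: affine_plane_through_line affine_plane_through_line_unique
      affine_line_subset_affine_plane)

theorem fact2p8:
  fixes S :: "('a::{field,finite} ^ 'n) set set"
  assumes "CARD('n) \<ge> 3"
    and "S \<subseteq> pvp_vertices" and "S \<noteq> {}"
  shows "pvp_expansion S \<ge> 1 - real (card S) / real (card (pvp_vertices :: ('a ^ 'n) set set))
                              - 3 / real CARD('a)"
proof -
  interpret affine_incidence_geometry "{L. affine_line L}" "pvp_vertices :: ('a ^ 'n) set set"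
    "CARD('a)" "CARD('n)"
    by (rule affine_incidence_geometry_affine_space[OF assms(1)])
  have "{(P, Q). P \<in> S \<and> Q \<notin> S \<and> pvp_edge P Q}
      = {(P, Q). P \<in> S \<and> Q \<in> pvp_vertices \<and> Q \<notin> S \<and> P \<inter> Q \<in> {L. affine_line L}}"
    "{(P, Q). P \<in> S \<and> pvp_edge P Q} = {(P, Q). P \<in> S \<and> Q \<in> pvp_vertices \<and> P \<inter> Q \<in> {L. affine_line L}}"
    using assms(2) unfolding pvp_edge_def by auto
  then show ?thesis
    unfolding pvp_expansion_def using edge_expansion_ge[OF assms(2,3)] by simp
qed

end
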